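(* Let $G$ be a cacti-graph and $a,b\in E(G)$. If $a$ and $b$ lie in the same component of $G$, then for every integer $k$ with $1\le k\le \Delta G$ there exists a subgraph $F$ of $G$ such that $a,b\in E(F)$, $F$ is a cacti-graph, and $\Delta F=k$. If $a$ and $b$ lie in different components of $G$, then for every integer $k$ with $2\le k\le\Delta G$ there exists a subgraph $F$ of $G$ such that $a,b\in E(F)$, $F$ is a cacti-graph, and $\Delta F=k$.
   Context: Graphs are finite, may have loops and parallel edges, and have no isolated vertices unless stated otherwise. A leaf is a vertex incident to exactly one edge, which is not a loop. $\Delta G=|E(G)|-|V(G)|$. A cycle is a connected graph all of whose vertices have degree 2 (a loop contributes 2). A cacti-graph is a graph with no isolated vertices, no leaves, and no component that is a cycle (equivalently, no isolated vertices, no leaves, and every component contains at least two cycles). *)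

theory Defs
  imports Main
begin

text \<open>A finite multigraph (loops and parallel edges allowed): vertex set V, edge set E,
  and an incidence map inc giving the set of endpoints of each edge
  (a singleton for a loop, a two-element set otherwise).\<close>
definition graph :: "'v set \<Rightarrow> 'e set \<Rightarrow> ('e \<Rightarrow> 'v set) \<Rightarrow> bool" where
  "graph V E inc \<longleftrightarrow> finite V \<and> finite E \<and>
     (\<forall>e\<in>E. inc e \<subseteq> V \<and> (card (inc e) = 1 \<or> card (inc e) = 2))"

definition degree :: "'e set \<Rightarrow> ('e \<Rightarrow> 'v set) \<Rightarrow> 'v \<Rightarrow> nat" where
  "degree E inc v = card {e\<in>E. v \<in> inc e \<and> card (inc e) = 2} + 2 * card {e\<in>E. inc e = {v}}"

definition isolated :: "'v set \<Rightarrow> 'e set \<Rightarrow> ('e \<Rightarrow> 'v set) \<Rightarrow> 'v \<Rightarrow> bool" where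
  "isolated V E inc v \<longleftrightarrow> v \<in> V \<and> \<not> (\<exists>e\<in>E. v \<in> inc e)"

definition leaf :: "'v set \<Rightarrow> 'e set \<Rightarrow> ('e \<Rightarrow> 'v set) \<Rightarrow> 'v \<Rightarrow> bool" where
  "leaf V E inc v \<longleftrightarrow> v \<in> V \<and> (\<exists>!e. e \<in> E \<and> v \<in> inc e) \<and>
     (\<forall>e\<in>E. v \<in> inc e \<longrightarrow> card (inc e) = 2)"

definition adj :: "'e set \<Rightarrow> ('e \<Rightarrow> 'v set) \<Rightarrow> 'v \<Rightarrow> 'v \<Rightarrow> bool" where
  "adj E inc u v \<longleftrightarrow> (\<exists>e\<in>E. u \<in> inc e \<and> v \<in> inc e)"

definition connected_graph :: "'v set \<Rightarrow> 'e set \<Rightarrow> ('e \<Rightarrow> 'v set) \<Rightarrow> bool" where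
  "connected_graph V E inc \<longleftrightarrow> V \<noteq> {} \<and> (\<forall>u\<in>V. \<forall>v\<in>V. (adj E inc)\<^sup>*\<^sup>* u v)"

definition components :: "'v set \<Rightarrow> 'e set \<Rightarrow> ('e \<Rightarrow> 'v set) \<Rightarrow> 'v set set" where
  "components V E inc = {{w \<in> V. (adj E inc)\<^sup>*\<^sup>* v w} | v. v \<in> V}"

definition is_cycle :: "'v set \<Rightarrow> 'e set \<Rightarrow> ('e \<Rightarrow> 'v set) \<Rightarrow> bool" where
  "is_cycle V E inc \<longleftrightarrow> connected_graph V E inc \<and> (\<forall>v\<in>V. degree E inc v = 2)"

definition cacti :: "'v set \<Rightarrow> 'e set \<Rightarrow> ('e \<Rightarrow> 'v set) \<Rightarrow> bool" where
  "cacti V E inc \<longleftrightarrow> graph V E inc \<and>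
     (\<forall>v. \<not> isolated V E inc v) \<and> (\<forall>v. \<not> leaf V E inc v) \<and>
     (\<forall>C\<in>components V E inc. \<not> is_cycle C {e\<in>E. inc e \<subseteq> C} inc)"

definition subgraph :: "'v set \<Rightarrow> 'e set \<Rightarrow> 'v set \<Rightarrow> 'e set \<Rightarrow> ('e \<Rightarrow> 'v set) \<Rightarrow> bool" where
  "subgraph VF EF V E inc \<longleftrightarrow> VF \<subseteq> V \<and> EF \<subseteq> E \<and> (\<forall>e\<in>EF. inc e \<subseteq> VF)"

text \<open>\<Delta>G = |E(G)| - |V(G)|.\<close>
definition excess :: "'v set \<Rightarrow> 'e set \<Rightarrow> int" where
  "excess V E = int (card E) - int (card V)"

definition same_component :: "'v set \<Rightarrow> 'e set \<Rightarrow> ('e \<Rightarrow> 'v set) \<Rightarrow> 'e \<Rightarrow> 'e \<Rightarrow> bool" where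
  "same_component V E inc a b \<longleftrightarrow> (\<exists>C\<in>components V E inc. inc a \<subseteq> C \<and> inc b \<subseteq> C)"

end

theory Submission
  imports Defs
begin

text \<open>
  We work with edge sets \<open>S\<close> of \<open>G\<close> and the subgraphs they span. Vertices of degree 1 in \<open>S\<close>
  are called pendant, and \<open>S\<close> is measured by its potential \<open>|S| - |V(S)| + #pendants\<close>, which
  is the excess \<open>\<Delta>S\<close> when \<open>S\<close> has no pendant vertex. As \<open>G\<close> has no leaves, every pendant
  vertex of \<open>S\<close> lies on an edge of \<open>G\<close> outside \<open>S\<close>, and attaching that edge does not raise the
  potential; hence \<open>S\<close> grows into a pendant-free edge set of excess at most its potential. A
  pendant-free \<open>S\<close> spans a cacti-graph as soon as each of its vertices reaches a vertex of degree
  at least 3 (\<open>S\<close> is branching); unlike being a cacti-graph, this survives adding edges and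
  vertex-disjoint unions.

  If \<open>a\<close> and \<open>b\<close> lie in one component, a shortest path joining them has potential 1. If
  growing it ends in a 2-regular graph, that graph is not a whole component of \<open>G\<close>, since \<open>G\<close>
  has no cycle components, and one more edge creates a vertex of degree 3 at potential 1. If \<open>a\<close>
  and \<open>b\<close> lie in different components, the two seeds grown from them are vertex-disjoint, of
  total excess at most 2. Finally, the excess of a pendant-free branching \<open>S \<noteq> E\<close> can be raised
  by at most one, preserving both properties: attach an edge meeting \<open>S\<close> and regrow, or, if no
  edge meets \<open>S\<close>, add a disjoint seed of excess at most 1. So every value up to \<open>\<Delta>G\<close> is attained.
\<close>

section \<open>Edge sets and degrees\<close>

definition verts :: "('e \<Rightarrow> 'v set) \<Rightarrow> 'e set \<Rightarrow> 'v set" where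
  "verts inc S = \<Union> (inc ` S)"

definition multigraph_edges :: "('e \<Rightarrow> 'v set) \<Rightarrow> 'e set \<Rightarrow> bool" where
  "multigraph_edges inc S \<longleftrightarrow> finite S \<and> (\<forall>e\<in>S. card (inc e) = 1 \<or> card (inc e) = 2)"

definition pendants :: "('e \<Rightarrow> 'v set) \<Rightarrow> 'e set \<Rightarrow> 'v set" where
  "pendants inc S = {v \<in> verts inc S. degree S inc v = 1}"

definition potential :: "('e \<Rightarrow> 'v set) \<Rightarrow> 'e set \<Rightarrow> int" where
  "potential inc S = excess (verts inc S) S + int (card (pendants inc S))"

definition linked :: "('e \<Rightarrow> 'v set) \<Rightarrow> 'e set \<Rightarrow> bool" where
  "linked inc S \<longleftrightarrow> (\<forall>u\<in>verts inc S. \<forall>w\<in>verts inc S. (adj S inc)\<^sup>*\<^sup>* u w)"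

definition branching :: "('e \<Rightarrow> 'v set) \<Rightarrow> 'e set \<Rightarrow> bool" where
  "branching inc S \<longleftrightarrow> (\<forall>v\<in>verts inc S. \<exists>w. (adj S inc)\<^sup>*\<^sup>* v w \<and> 3 \<le> degree S inc w)"

lemma mem_verts_iff: "v \<in> verts inc S \<longleftrightarrow> (\<exists>e\<in>S. v \<in> inc e)"
  by (auto simp: verts_def)

lemma verts_insert [simp]: "verts inc (insert f S) = inc f \<union> verts inc S"
  by (auto simp: verts_def)

lemma verts_Un: "verts inc (S \<union> T) = verts inc S \<union> verts inc T"
  by (auto simp: verts_def)

lemma verts_mono: "S \<subseteq> T \<Longrightarrow> verts inc S \<subseteq> verts inc T"
  by (auto simp: verts_def)

lemma rtranclp_adj_mono: "S \<subseteq> T \<Longrightarrow> (adj S inc)\<^sup>*\<^sup>* u w \<Longrightarrow> (adj T inc)\<^sup>*\<^sup>* u w"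
  by (erule mono_rtranclp[rule_format, rotated]) (auto simp: adj_def)

lemma rtranclp_adj_sym: "(adj S inc)\<^sup>*\<^sup>* u w \<Longrightarrow> (adj S inc)\<^sup>*\<^sup>* w u"
  by (metis adj_def symp_def symp_rtranclp)

lemma multigraph_edges_subset: "multigraph_edges inc T \<Longrightarrow> S \<subseteq> T \<Longrightarrow> multigraph_edges inc S"
  by (auto simp: multigraph_edges_def intro: finite_subset)

lemma multigraph_edges_incD:
  assumes "multigraph_edges inc S" "e \<in> S"
  shows "finite (inc e)" "inc e \<noteq> {}"
proof -
  have "card (inc e) \<noteq> 0"
    using assms by (auto simp: multigraph_edges_def)
  then show "finite (inc e)" "inc e \<noteq> {}"
    by (simp_all add: card_eq_0_iff)
qed

lemma card_1_eq_singleton: "card A = 1 \<Longrightarrow> v \<in> A \<Longrightarrow> A = {v}"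
  by (metis card_1_singletonE singletonD)

lemma multigraph_edges_inc_eq_pair:
  assumes "multigraph_edges inc S" "f \<in> S" "x \<in> inc f" "z \<in> inc f" "x \<noteq> z"
  shows "inc f = {x, z}"
proof -
  have "card (inc f) = 1 \<or> card (inc f) = 2"
    using assms(1,2) by (simp add: multigraph_edges_def)
  then have "card (inc f) = 2"
    using card_1_eq_singleton[of "inc f" x] assms(3-5) by auto
  then show ?thesis
    using assms(3-5) by (auto simp: card_2_iff)
qed

lemma finite_verts: "multigraph_edges inc S \<Longrightarrow> finite (verts inc S)"
  unfolding verts_def using multigraph_edges_incD(1)[of inc S] by (auto simp: multigraph_edges_def)

lemma degree_insert:
  assumes "finite S" "f \<notin> S"
  shows "degree (insert f S) inc v = degree S inc v
     + (if v \<in> inc f \<and> card (inc f) = 2 then 1 else 0) + (if inc f = {v} then 2 else 0)"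
proof -
  have "{e \<in> insert f S. v \<in> inc e \<and> card (inc e) = 2} =
     (if v \<in> inc f \<and> card (inc f) = 2 then insert f {e \<in> S. v \<in> inc e \<and> card (inc e) = 2}
      else {e \<in> S. v \<in> inc e \<and> card (inc e) = 2})"
    "{e \<in> insert f S. inc e = {v}} =
     (if inc f = {v} then insert f {e \<in> S. inc e = {v}} else {e \<in> S. inc e = {v}})"
    by auto
  then show ?thesis
    using assms by (simp add: degree_def)
qed

lemma degree_mono: "S \<subseteq> T \<Longrightarrow> finite T \<Longrightarrow> degree S inc v \<le> degree T inc v"
  unfolding degree_def by (intro add_mono mult_le_mono2 card_mono) auto

lemma degree_eq_if_incident_subset:
  assumes "S \<subseteq> T" "\<And>e. e \<in> T \<Longrightarrow> v \<in> inc e \<Longrightarrow> e \<in> S"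
  shows "degree S inc v = degree T inc v"
proof -
  have "{e \<in> S. v \<in> inc e \<and> card (inc e) = 2} = {e \<in> T. v \<in> inc e \<and> card (inc e) = 2}"
    "{e \<in> S. inc e = {v}} = {e \<in> T. inc e = {v}}"
    using assms by auto
  then show ?thesis
    by (simp add: degree_def)
qed

lemma degree_eq_0: "v \<notin> verts inc S \<Longrightarrow> degree S inc v = 0"
proof -
  assume "v \<notin> verts inc S"
  then have "{e \<in> S. v \<in> inc e \<and> card (inc e) = 2} = {}" "{e \<in> S. inc e = {v}} = {}"
    by (auto simp: mem_verts_iff)
  then show ?thesis
    unfolding degree_def by (simp only: card.empty)
qed

lemma mem_verts_if_degree_pos: "0 < degree S inc v \<Longrightarrow> v \<in> verts inc S"
  using degree_eq_0 by (metis less_numeral_extra(3))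

lemma incident_weight_pos:
  assumes "card (inc f) = 1 \<or> card (inc f) = 2" "v \<in> inc f"
  shows "1 \<le> (if v \<in> inc f \<and> card (inc f) = 2 then 1 else 0) + (if inc f = {v} then 2 else (0::nat))"
  using assms(1)
proof
  assume "card (inc f) = 1"
  then have "inc f = {v}"
    using assms(2) by (rule card_1_eq_singleton)
  then show ?thesis
    by simp
qed (use assms(2) in simp)

lemma degree_pos:
  assumes "multigraph_edges inc S" "v \<in> verts inc S"
  shows "1 \<le> degree S inc v"
proof -
  obtain e where e: "e \<in> S" "v \<in> inc e"
    using assms(2) by (auto simp: mem_verts_iff)
  have "S = insert e (S - {e})" "finite (S - {e})"
    using e(1) assms(1) by (auto simp: multigraph_edges_def)
  moreover have "card (inc e) = 1 \<or> card (inc e) = 2"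
    using assms(1) e(1) by (simp add: multigraph_edges_def)
  ultimately show ?thesis
    using degree_insert[of "S - {e}" e inc v] incident_weight_pos[of inc e v] e(2) by simp
qed

lemma leaf_imp_degree_1: "leaf V S inc v \<Longrightarrow> degree S inc v = 1"
proof -
  assume "leaf V S inc v"
  then obtain e0 where e0: "e0 \<in> S" "v \<in> inc e0" and unique: "\<And>e. e \<in> S \<Longrightarrow> v \<in> inc e \<Longrightarrow> e = e0"
    and nonloop: "\<And>e. e \<in> S \<Longrightarrow> v \<in> inc e \<Longrightarrow> card (inc e) = 2"
    unfolding leaf_def by blast
  have "{e \<in> S. v \<in> inc e \<and> card (inc e) = 2} = {e0}"
    using e0 unique nonloop by blast
  moreover have "{e \<in> S. inc e = {v}} = {}"
    using nonloop by fastforce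
  ultimately show ?thesis
    unfolding degree_def by (simp only: card.empty) simp
qed

lemma degree_1_imp_unique_edge:
  assumes "multigraph_edges inc S" "degree S inc v = 1"
  obtains e0 where "e0 \<in> S" "card (inc e0) = 2" "v \<in> inc e0" "\<And>e. e \<in> S \<Longrightarrow> v \<in> inc e \<Longrightarrow> e = e0"
proof -
  have fin: "finite S"
    using assms(1) by (simp add: multigraph_edges_def)
  have one: "card {e \<in> S. v \<in> inc e \<and> card (inc e) = 2} = 1"
    and zero: "card {e \<in> S. inc e = {v}} = 0"
    using assms(2) unfolding degree_def by arith+
  from one obtain e0 where e0: "{e \<in> S. v \<in> inc e \<and> card (inc e) = 2} = {e0}"
    by (rule card_1_singletonE)
  have noloop: "{e \<in> S. inc e = {v}} = {}"
    using zero fin by simp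
  have "e = e0" if "e \<in> S" "v \<in> inc e" for e
  proof (cases "card (inc e) = 2")
    case False
    then have "card (inc e) = 1"
      using that(1) assms(1) by (auto simp: multigraph_edges_def)
    then have "inc e = {v}"
      using that(2) by (rule card_1_eq_singleton)
    then show ?thesis
      using noloop that(1) by blast
  qed (use that e0 in auto)
  then show ?thesis
    using e0 that by blast
qed

lemma sum_degree_verts:
  assumes S: "multigraph_edges inc S"
  shows "(\<Sum>v\<in>verts inc S. degree S inc v) = 2 * card S"
proof -
  define w where "w e v = (if v \<in> inc e \<and> card (inc e) = 2 then 1 else 0)
    + (if inc e = {v} then 2 else (0::nat))" for e v
  have fin: "finite S"
    using S by (simp add: multigraph_edges_def)
  have card_filter: "card {e \<in> S. P e} = (\<Sum>e\<in>S. if P e then 1 else 0)" for P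
    unfolding card_eq_sum using fin by (rule sum.inter_filter)
  have degree_as_sum: "degree S inc v = (\<Sum>e\<in>S. w e v)" for v
    unfolding degree_def card_filter w_def sum.distrib sum_distrib_left
    by (intro arg_cong2[where f="(+)"] sum.cong) auto
  have edge_weight: "(\<Sum>v\<in>verts inc S. w e v) = 2" if e: "e \<in> S" for e
  proof -
    have "(\<Sum>v\<in>verts inc S. w e v) = (\<Sum>v\<in>inc e. w e v)"
      using finite_verts[OF S] e by (intro sum.mono_neutral_right) (auto simp: w_def mem_verts_iff)
    also have "\<dots> = 2"
    proof (cases "card (inc e) = 2")
      case True
      then obtain p q where "inc e = {p, q}" "p \<noteq> q"
        by (meson card_2_iff)
      then show ?thesis
        using True by (simp add: w_def)
    next
      case False
      then have "card (inc e) = 1"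
        using S e by (auto simp: multigraph_edges_def)
      then obtain p where "inc e = {p}"
        by (rule card_1_singletonE)
      then show ?thesis
        by (simp add: w_def)
    qed
    finally show ?thesis .
  qed
  have "(\<Sum>v\<in>verts inc S. degree S inc v) = (\<Sum>e\<in>S. \<Sum>v\<in>verts inc S. w e v)"
    unfolding degree_as_sum by (rule sum.swap)
  also have "\<dots> = 2 * card S"
    using edge_weight by simp
  finally show ?thesis .
qed

lemma excess_eq_0_if_2_regular:
  assumes "multigraph_edges inc S" "\<forall>v\<in>verts inc S. degree S inc v = 2"
  shows "excess (verts inc S) S = 0"
proof -
  have "2 * card S = 2 * card (verts inc S)"
    using sum_degree_verts[OF assms(1)] assms(2) by simp
  then show ?thesis
    by (simp add: excess_def)
qed

section \<open>The potential\<close>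

lemma pendants_insert_inside:
  assumes S: "multigraph_edges inc (insert f S)" and f: "f \<notin> S" and sub: "inc f \<subseteq> verts inc S"
  shows "pendants inc (insert f S) \<subseteq> pendants inc S - inc f"
proof
  fix v
  assume v: "v \<in> pendants inc (insert f S)"
  then have vS: "v \<in> verts inc S" and deg: "degree (insert f S) inc v = 1"
    using sub by (auto simp: pendants_def)
  have fin: "finite S"
    using S by (simp add: multigraph_edges_def)
  have "1 \<le> degree S inc v"
    using multigraph_edges_subset[OF S] vS by (intro degree_pos) auto
  moreover have "card (inc f) = 1 \<or> card (inc f) = 2"
    using S by (simp add: multigraph_edges_def)
  ultimately show "v \<in> pendants inc S - inc f"
    using deg degree_insert[OF fin f, of inc v] incident_weight_pos[of inc f v] vS
    by (cases "v \<in> inc f") (auto simp: pendants_def)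
qed

lemma pendants_insert_new_vertex:
  assumes S: "multigraph_edges inc (insert f S)" and f: "f \<notin> S"
    and fxz: "inc f = {x, z}" "x \<noteq> z" and x: "x \<in> verts inc S" and z: "z \<notin> verts inc S"
  shows "pendants inc (insert f S) = insert z (pendants inc S - {x})"
proof -
  have fin: "finite S"
    using S by (simp add: multigraph_edges_def)
  have dz: "degree (insert f S) inc z = 1"
    using degree_insert[OF fin f, of inc z] degree_eq_0[OF z] fxz by auto
  have dx: "2 \<le> degree (insert f S) inc x"
    using degree_insert[OF fin f, of inc x] degree_pos[OF multigraph_edges_subset[OF S] x] fxz
    by auto
  have other: "degree (insert f S) inc v = degree S inc v" if "v \<noteq> x" "v \<noteq> z" for v
    using degree_insert[OF fin f, of inc v] fxz that by auto
  show ?thesis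
  proof (rule set_eqI)
    fix v
    show "v \<in> pendants inc (insert f S) \<longleftrightarrow> v \<in> insert z (pendants inc S - {x})"
      using dz dx other[of v] fxz z by (cases "v = x"; cases "v = z") (auto simp: pendants_def)
  qed
qed

lemma potential_insert:
  assumes S: "multigraph_edges inc (insert f S)" and f: "f \<notin> S"
    and x: "x \<in> inc f" "x \<in> verts inc S"
  shows "potential inc (insert f S) \<le> potential inc S + 1 - (if x \<in> pendants inc S then 1 else 0)"
proof -
  have S': "multigraph_edges inc S"
    using S by (rule multigraph_edges_subset) auto
  have finP: "finite (pendants inc S)"
    using finite_verts[OF S'] by (simp add: pendants_def)
  have cardE: "card (insert f S) = card S + 1"
    using S' f by (simp add: multigraph_edges_def)
  have cardP: "int (card (pendants inc S - {x})) = int (card (pendants inc S))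
      - (if x \<in> pendants inc S then 1 else 0)"
  proof (cases "x \<in> pendants inc S")
    case True
    then have "1 \<le> card (pendants inc S)"
      using finP by (auto simp: Suc_le_eq card_gt_0_iff)
    then show ?thesis
      using True finP by (simp add: of_nat_diff)
  qed simp
  show ?thesis
  proof (cases "inc f \<subseteq> verts inc S")
    case True
    have "pendants inc (insert f S) \<subseteq> pendants inc S - {x}"
      using pendants_insert_inside[OF S f True] x(1) by blast
    then have "card (pendants inc (insert f S)) \<le> card (pendants inc S - {x})"
      using finP by (intro card_mono) auto
    moreover have "verts inc (insert f S) = verts inc S"
      using True by auto
    ultimately show ?thesis
      using cardE cardP unfolding potential_def excess_def by (simp split: if_splits)
  next
    case False
    then obtain z where z: "z \<in> inc f" "z \<notin> verts inc S"
      by auto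
    then have "x \<noteq> z"
      using x by auto
    then have fxz: "inc f = {x, z}"
      using S x(1) z(1) by (intro multigraph_edges_inc_eq_pair) auto
    have "card (pendants inc (insert f S)) = card (pendants inc S - {x}) + 1"
      using pendants_insert_new_vertex[OF S f fxz \<open>x \<noteq> z\<close> x(2) z(2)] finP z(2)
      by (simp add: pendants_def)
    moreover have "card (verts inc (insert f S)) = card (verts inc S) + 1"
      using fxz x z finite_verts[OF S'] by (simp add: insert_absorb)
    ultimately show ?thesis
      using cardE cardP unfolding potential_def excess_def by (simp split: if_splits)
  qed
qed

lemma potential_singleton:
  assumes a: "multigraph_edges inc {a}" and x: "x \<in> inc a"
  shows "potential inc {a} \<le> (if x \<in> pendants inc {a} then 1 else 0)"
proof -
  have deg: "degree {a} inc v = (if v \<in> inc a \<and> card (inc a) = 2 then 1 else 0)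
      + (if inc a = {v} then 2 else 0)" for v
    using degree_insert[of "{}" a inc v] by (simp add: degree_def)
  have "card (inc a) = 1 \<or> card (inc a) = 2"
    using a by (simp add: multigraph_edges_def)
  then show ?thesis
  proof
    assume "card (inc a) = 1"
    then have "inc a = {x}"
      using x by (rule card_1_eq_singleton)
    then show ?thesis
      using deg by (simp add: potential_def pendants_def excess_def verts_def)
  next
    assume two: "card (inc a) = 2"
    then have "pendants inc {a} = inc a"
      using deg by (auto simp: pendants_def verts_def)
    then show ?thesis
      using two x by (simp add: potential_def excess_def verts_def)
  qed
qed

lemma potential_singleton_le_1:
  assumes "multigraph_edges inc {a}"
  shows "potential inc {a} \<le> 1"
proof -
  obtain x where "x \<in> inc a"
    using multigraph_edges_incD(2)[OF assms] by blast
  then have "potential inc {a} \<le> (if x \<in> pendants inc {a} then 1 else 0)"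
    by (rule potential_singleton[OF assms])
  then show ?thesis
    by (simp split: if_splits)
qed

section \<open>Linked and branching edge sets\<close>

lemma linked_singleton: "linked inc {f}"
  unfolding linked_def verts_def by (auto simp: adj_def)

lemma linked_insert:
  assumes T: "linked inc T" and x: "x \<in> inc f" "x \<in> verts inc T"
  shows "linked inc (insert f T)"
proof -
  let ?R = "adj (insert f T) inc"
  have to_x: "?R\<^sup>*\<^sup>* y x" if "y \<in> verts inc (insert f T)" for y
  proof (cases "y \<in> inc f")
    case True
    then have "?R y x"
      using x by (auto simp: adj_def)
    then show ?thesis
      by blast
  next
    case False
    then have "(adj T inc)\<^sup>*\<^sup>* y x"
      using that T x(2) by (auto simp: linked_def)
    then show ?thesis
      by (rule rtranclp_adj_mono[rotated]) auto
  qed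
  show ?thesis
    unfolding linked_def
  proof (intro ballI)
    fix u w
    assume "u \<in> verts inc (insert f T)" "w \<in> verts inc (insert f T)"
    then have "?R\<^sup>*\<^sup>* u x" "?R\<^sup>*\<^sup>* x w"
      by (simp_all add: to_x rtranclp_adj_sym)
    then show "?R\<^sup>*\<^sup>* u w"
      by (rule rtranclp_trans)
  qed
qed

lemma branching_if_linked:
  assumes "linked inc S" "3 \<le> degree S inc w"
  shows "branching inc S"
  unfolding branching_def
proof
  fix v
  assume "v \<in> verts inc S"
  moreover have "w \<in> verts inc S"
    using assms(2) by (intro mem_verts_if_degree_pos) simp
  ultimately have "(adj S inc)\<^sup>*\<^sup>* v w"
    using assms(1) unfolding linked_def by blast
  then show "\<exists>w. (adj S inc)\<^sup>*\<^sup>* v w \<and> 3 \<le> degree S inc w"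
    using assms(2) by blast
qed

lemma branching_reaches_in_superset:
  assumes "branching inc S" "S \<subseteq> T" "finite T" "v \<in> verts inc S"
  shows "\<exists>w. (adj T inc)\<^sup>*\<^sup>* v w \<and> 3 \<le> degree T inc w"
proof -
  obtain w where w: "(adj S inc)\<^sup>*\<^sup>* v w" "3 \<le> degree S inc w"
    using assms(1,4) unfolding branching_def by blast
  have "(adj T inc)\<^sup>*\<^sup>* v w"
    using assms(2) w(1) by (rule rtranclp_adj_mono)
  moreover have "degree S inc w \<le> degree T inc w"
    using assms(2,3) by (rule degree_mono)
  ultimately show ?thesis
    using w(2) by (intro exI[of _ w]) simp
qed

lemma branching_insert:
  assumes T: "branching inc T" "finite T" and x: "x \<in> inc f" "x \<in> verts inc T"
  shows "branching inc (insert f T)"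
  unfolding branching_def
proof
  fix v
  assume v: "v \<in> verts inc (insert f T)"
  have reach: "\<exists>w. (adj (insert f T) inc)\<^sup>*\<^sup>* u w \<and> 3 \<le> degree (insert f T) inc w"
    if "u \<in> verts inc T" for u
    using T(2) by (intro branching_reaches_in_superset[OF T(1) _ _ that]) auto
  show "\<exists>w. (adj (insert f T) inc)\<^sup>*\<^sup>* v w \<and> 3 \<le> degree (insert f T) inc w"
  proof (cases "v \<in> verts inc T")
    case False
    then have "adj (insert f T) inc v x"
      using v x(1) by (auto simp: adj_def)
    then show ?thesis
      using reach[OF x(2)] by (meson converse_rtranclp_into_rtranclp)
  qed (rule reach)
qed

lemma branching_Un:
  assumes "branching inc A" "branching inc B" "finite (A \<union> B)"
  shows "branching inc (A \<union> B)"
  unfolding branching_def verts_Un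
proof
  fix v
  assume "v \<in> verts inc A \<union> verts inc B"
  then show "\<exists>w. (adj (A \<union> B) inc)\<^sup>*\<^sup>* v w \<and> 3 \<le> degree (A \<union> B) inc w"
    using branching_reaches_in_superset[OF assms(1) _ assms(3)]
      branching_reaches_in_superset[OF assms(2) _ assms(3)]
    by blast
qed

lemma degree_Un_disjoint_verts:
  assumes "verts inc A \<inter> verts inc B = {}" "v \<in> verts inc A"
  shows "degree (A \<union> B) inc v = degree A inc v"
proof (rule degree_eq_if_incident_subset[symmetric])
  fix e
  assume e: "e \<in> A \<union> B" "v \<in> inc e"
  show "e \<in> A"
  proof (rule ccontr)
    assume "e \<notin> A"
    then have "v \<in> verts inc B"
      using e by (auto simp: mem_verts_iff)
    then show False
      using assms by blast
  qed
qed simp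

lemma pendants_Un_disjoint_verts:
  assumes "verts inc A \<inter> verts inc B = {}"
  shows "pendants inc (A \<union> B) = pendants inc A \<union> pendants inc B"
proof -
  have "degree (A \<union> B) inc v = degree B inc v" if "v \<in> verts inc B" for v
    using degree_Un_disjoint_verts[of inc B A v] assms that by (simp add: Un_commute Int_commute)
  then show ?thesis
    using degree_Un_disjoint_verts[OF assms] unfolding pendants_def verts_Un by auto
qed

lemma excess_verts_Un_disjoint_verts:
  assumes "multigraph_edges inc A" "multigraph_edges inc B" "verts inc A \<inter> verts inc B = {}"
  shows "excess (verts inc (A \<union> B)) (A \<union> B) = excess (verts inc A) A + excess (verts inc B) B"
proof -
  have "A \<inter> B = {}"
    using assms multigraph_edges_incD(2)[OF assms(1)] by (fastforce simp: mem_verts_iff)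
  then have "card (A \<union> B) = card A + card B"
    using assms(1,2) by (simp add: multigraph_edges_def card_Un_disjoint)
  moreover have "card (verts inc (A \<union> B)) = card (verts inc A) + card (verts inc B)"
    unfolding verts_Un using assms by (simp add: finite_verts card_Un_disjoint)
  ultimately show ?thesis
    by (simp add: excess_def)
qed

lemma pendant_free_branching_Un:
  assumes AB: "multigraph_edges inc (A \<union> B)" "verts inc A \<inter> verts inc B = {}"
    and A: "pendants inc A = {}" "branching inc A" and B: "pendants inc B = {}" "branching inc B"
  shows "pendants inc (A \<union> B) = {}" "branching inc (A \<union> B)"
    "excess (verts inc (A \<union> B)) (A \<union> B) = excess (verts inc A) A + excess (verts inc B) B"
proof -
  show "pendants inc (A \<union> B) = {}"
    using pendants_Un_disjoint_verts[OF AB(2)] A(1) B(1) by simp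
  show "branching inc (A \<union> B)"
    using AB(1) A(2) B(2) by (intro branching_Un) (simp_all add: multigraph_edges_def)
  show "excess (verts inc (A \<union> B)) (A \<union> B) = excess (verts inc A) A + excess (verts inc B) B"
    using AB by (intro excess_verts_Un_disjoint_verts) (auto intro: multigraph_edges_subset)
qed

lemma graph_verts: "multigraph_edges inc S \<Longrightarrow> graph (verts inc S) S inc"
  unfolding graph_def by (auto simp: finite_verts multigraph_edges_def mem_verts_iff)

lemma not_is_cycle_component_if_branching:
  assumes br: "branching inc S" and C: "C \<in> components (verts inc S) S inc"
  shows "\<not> is_cycle C {e \<in> S. inc e \<subseteq> C} inc"
proof
  assume cyc: "is_cycle C {e \<in> S. inc e \<subseteq> C} inc"
  obtain v where v: "v \<in> verts inc S" and Cv: "C = {w \<in> verts inc S. (adj S inc)\<^sup>*\<^sup>* v w}"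
    using C by (auto simp: components_def)
  obtain w where w: "(adj S inc)\<^sup>*\<^sup>* v w" "3 \<le> degree S inc w"
    using br v unfolding branching_def by blast
  have "w \<in> verts inc S"
    using w(2) by (intro mem_verts_if_degree_pos) simp
  then have wC: "w \<in> C"
    using Cv w(1) by blast
  have "inc e \<subseteq> C" if "e \<in> S" "w \<in> inc e" for e
  proof
    fix y
    assume y: "y \<in> inc e"
    then have "adj S inc w y"
      using that by (auto simp: adj_def)
    then have "(adj S inc)\<^sup>*\<^sup>* v y"
      by (rule rtranclp.rtrancl_into_rtrancl[OF w(1)])
    moreover have "y \<in> verts inc S"
      using y that(1) by (auto simp: mem_verts_iff)
    ultimately show "y \<in> C"
      using Cv by blast
  qed
  then have "degree {e \<in> S. inc e \<subseteq> C} inc w = degree S inc w"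
    by (intro degree_eq_if_incident_subset) auto
  then show False
    using cyc wC w(2) unfolding is_cycle_def by auto
qed

lemma cacti_verts:
  assumes S: "multigraph_edges inc S" and P: "pendants inc S = {}" and br: "branching inc S"
  shows "cacti (verts inc S) S inc"
proof -
  have "\<not> leaf (verts inc S) S inc v" for v
    using leaf_imp_degree_1[of "verts inc S" S inc v] P by (auto simp: leaf_def pendants_def)
  moreover have "\<not> isolated (verts inc S) S inc v" for v
    by (auto simp: isolated_def mem_verts_iff)
  ultimately show ?thesis
    unfolding cacti_def using graph_verts[OF S] not_is_cycle_component_if_branching[OF br] by blast
qed

lemma insert_path_edge:
  assumes S: "multigraph_edges inc (insert f S)" "linked inc S" "f \<notin> S"
    and fxz: "inc f = {x, z}" "x \<in> verts inc S" "z \<notin> verts inc S"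
    and potential: "potential inc S \<le> (if x \<in> pendants inc S then 1 else 0)"
  shows "linked inc (insert f S)" "z \<in> pendants inc (insert f S)" "potential inc (insert f S) \<le> 1"
proof -
  have "x \<noteq> z"
    using fxz(2,3) by blast
  have x: "x \<in> inc f"
    using fxz(1) by simp
  show "linked inc (insert f S)"
    using S(2) x fxz(2) by (rule linked_insert)
  show "z \<in> pendants inc (insert f S)"
    using pendants_insert_new_vertex[OF S(1,3) fxz(1) \<open>x \<noteq> z\<close> fxz(2,3)] by blast
  show "potential inc (insert f S) \<le> 1"
    using potential_insert[OF S(1,3) x fxz(2)] potential by (simp split: if_splits)
qed

section \<open>Growing edge sets inside a cacti-graph\<close>

locale cacti_graph =
  fixes V :: "'v set" and E :: "'e set" and inc :: "'e \<Rightarrow> 'v set"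
  assumes cacti: "cacti V E inc"
begin

lemma multigraph_edges_E: "multigraph_edges inc E"
  using cacti by (simp add: cacti_def graph_def multigraph_edges_def)

lemma multigraph_edges: "S \<subseteq> E \<Longrightarrow> multigraph_edges inc S"
  by (rule multigraph_edges_subset[OF multigraph_edges_E])

lemma finite_E: "finite E"
  using multigraph_edges_E by (simp add: multigraph_edges_def)

lemma verts_E: "verts inc E = V"
proof
  have "\<forall>e\<in>E. inc e \<subseteq> V"
    using cacti by (simp add: cacti_def graph_def)
  then show "verts inc E \<subseteq> V"
    by (auto simp: verts_def)
  show "V \<subseteq> verts inc E"
    using cacti by (auto simp: cacti_def isolated_def mem_verts_iff)
qed

lemma verts_subset: "S \<subseteq> E \<Longrightarrow> verts inc S \<subseteq> V"
  by (metis verts_E verts_mono)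

lemma pendant_has_outside_edge:
  assumes S: "S \<subseteq> E" and x: "x \<in> pendants inc S"
  shows "\<exists>f\<in>E. f \<notin> S \<and> x \<in> inc f"
proof (rule ccontr)
  assume "\<not> ?thesis"
  then have inside: "\<And>f. f \<in> E \<Longrightarrow> x \<in> inc f \<Longrightarrow> f \<in> S"
    by blast
  have "degree S inc x = 1"
    using x by (simp add: pendants_def)
  then obtain e0 where e0: "e0 \<in> S" "card (inc e0) = 2" "x \<in> inc e0"
    and unique: "\<And>e. e \<in> S \<Longrightarrow> x \<in> inc e \<Longrightarrow> e = e0"
    using degree_1_imp_unique_edge[OF multigraph_edges[OF S]] by blast
  have unique_E: "e = e0" if "e \<in> E" "x \<in> inc e" for e
    using inside[OF that] that(2) by (rule unique)
  have "leaf V E inc x"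
    unfolding leaf_def
  proof (intro conjI ex1I ballI impI)
    show "x \<in> V"
      using x verts_subset[OF S] by (auto simp: pendants_def)
    show "e0 \<in> E" "x \<in> inc e0"
      using S e0 by blast+
    show "e = e0" if "e \<in> E \<and> x \<in> inc e" for e
      using that unique_E by blast
    show "card (inc e) = 2" if "e \<in> E" "x \<in> inc e" for e
      using unique_E[OF that] e0(2) by simp
  qed
  then show False
    using cacti by (simp add: cacti_def)
qed

lemma pendant_free_extension:
  assumes Q_insert: "\<And>T f x. Q T \<Longrightarrow> T \<subseteq> E \<Longrightarrow> x \<in> inc f \<Longrightarrow> x \<in> verts inc T \<Longrightarrow> Q (insert f T)"
    and "S \<subseteq> E" "Q S"
  shows "\<exists>S'. S \<subseteq> S' \<and> S' \<subseteq> E \<and> Q S' \<and> pendants inc S' = {} \<and>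
    excess (verts inc S') S' \<le> potential inc S"
  using assms(2,3)
proof (induction "card (E - S)" arbitrary: S rule: less_induct)
  case less
  show ?case
  proof (cases "pendants inc S = {}")
    case True
    then have "excess (verts inc S) S \<le> potential inc S"
      by (simp add: potential_def)
    then show ?thesis
      using less.prems True by (intro exI[of _ S]) simp
  next
    case False
    then obtain x where x: "x \<in> pendants inc S"
      by blast
    then have xS: "x \<in> verts inc S"
      by (simp add: pendants_def)
    obtain f where f: "f \<in> E" "f \<notin> S" "x \<in> inc f"
      using pendant_has_outside_edge[OF less.prems(1) x] by blast
    have fS: "insert f S \<subseteq> E"
      using less.prems(1) f(1) by blast
    have "card (E - insert f S) < card (E - S)"
      using f finite_E by (intro psubset_card_mono) auto
    moreover have "Q (insert f S)"
      using Q_insert[OF less.prems(2,1) f(3) xS] .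
    ultimately have "\<exists>S'. insert f S \<subseteq> S' \<and> S' \<subseteq> E \<and> Q S' \<and> pendants inc S' = {} \<and>
        excess (verts inc S') S' \<le> potential inc (insert f S)"
      by (rule less.hyps[OF _ fS])
    then obtain S' where S': "insert f S \<subseteq> S'" "S' \<subseteq> E" "Q S'" "pendants inc S' = {}"
      and excess_S': "excess (verts inc S') S' \<le> potential inc (insert f S)"
      by blast
    have "potential inc (insert f S) \<le> potential inc S"
      using potential_insert[OF multigraph_edges[OF fS] f(2,3) xS] x by simp
    then have "excess (verts inc S') S' \<le> potential inc S"
      using excess_S' by linarith
    moreover have "S \<subseteq> S'"
      using S'(1) by blast
    ultimately show ?thesis
      using S'(2-4) by blast
  qed
qed

lemma reachable_in_verts_if_closed:
  assumes closed: "\<And>g. g \<in> E \<Longrightarrow> inc g \<inter> verts inc S \<noteq> {} \<Longrightarrow> g \<in> S"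
    and "(adj E inc)\<^sup>*\<^sup>* z u" "z \<in> verts inc S"
  shows "u \<in> verts inc S"
  using assms(2,3)
proof induction
  case (step y u)
  obtain g where g: "g \<in> E" "y \<in> inc g" "u \<in> inc g"
    using step.hyps(2) by (auto simp: adj_def)
  then have "y \<in> inc g \<inter> verts inc S"
    using step.IH[OF step.prems] by blast
  then have "g \<in> S"
    using closed[OF g(1)] by blast
  then show ?case
    using g(3) by (auto simp: mem_verts_iff)
qed

lemma closed_linked_component:
  assumes S: "S \<subseteq> E" "S \<noteq> {}" "linked inc S"
    and closed: "\<And>g. g \<in> E \<Longrightarrow> inc g \<inter> verts inc S \<noteq> {} \<Longrightarrow> g \<in> S"
  shows "verts inc S \<in> components V E inc" "{g \<in> E. inc g \<subseteq> verts inc S} = S"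
proof -
  obtain e v where "e \<in> S" "v \<in> inc e"
    using S(2) multigraph_edges_incD(2)[OF multigraph_edges[OF S(1)]] by blast
  then have v: "v \<in> verts inc S"
    by (auto simp: mem_verts_iff)
  have "verts inc S = {w \<in> V. (adj E inc)\<^sup>*\<^sup>* v w}"
  proof
    show "{w \<in> V. (adj E inc)\<^sup>*\<^sup>* v w} \<subseteq> verts inc S"
      using reachable_in_verts_if_closed[OF closed _ v] by blast
    show "verts inc S \<subseteq> {w \<in> V. (adj E inc)\<^sup>*\<^sup>* v w}"
    proof
      fix w
      assume w: "w \<in> verts inc S"
      then have "(adj S inc)\<^sup>*\<^sup>* v w"
        using S(3) v by (simp add: linked_def)
      then have "(adj E inc)\<^sup>*\<^sup>* v w"
        by (rule rtranclp_adj_mono[OF S(1)])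
      then show "w \<in> {w \<in> V. (adj E inc)\<^sup>*\<^sup>* v w}"
        using w verts_subset[OF S(1)] by blast
    qed
  qed
  then show "verts inc S \<in> components V E inc"
    unfolding components_def using v verts_subset[OF S(1)] by blast
  show "{g \<in> E. inc g \<subseteq> verts inc S} = S"
  proof
    show "{g \<in> E. inc g \<subseteq> verts inc S} \<subseteq> S"
    proof
      fix g
      assume g: "g \<in> {g \<in> E. inc g \<subseteq> verts inc S}"
      then have "inc g \<noteq> {}"
        using multigraph_edges_incD(2)[OF multigraph_edges_E] by blast
      then have "inc g \<inter> verts inc S \<noteq> {}"
        using g by blast
      then show "g \<in> S"
        using closed g by blast
    qed
    show "S \<subseteq> {g \<in> E. inc g \<subseteq> verts inc S}"
      using S(1) by (auto simp: mem_verts_iff)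
  qed
qed

lemma closed_linked_not_2_regular:
  assumes S: "S \<subseteq> E" "S \<noteq> {}" "linked inc S"
    and closed: "\<And>g. g \<in> E \<Longrightarrow> inc g \<inter> verts inc S \<noteq> {} \<Longrightarrow> g \<in> S"
  shows "\<exists>v\<in>verts inc S. degree S inc v \<noteq> 2"
proof (rule ccontr)
  assume "\<not> ?thesis"
  moreover obtain e v where "e \<in> S" "v \<in> inc e"
    using S(2) multigraph_edges_incD(2)[OF multigraph_edges[OF S(1)]] by blast
  then have "verts inc S \<noteq> {}"
    by (auto simp: verts_def)
  ultimately have "is_cycle (verts inc S) S inc"
    using S(3) unfolding is_cycle_def connected_graph_def linked_def by blast
  then show False
    using cacti closed_linked_component[OF S closed] by (auto simp: cacti_def)
qed

lemma linked_pendant_free_extension: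
  assumes "S \<subseteq> E" "linked inc S"
  shows "\<exists>S'. S \<subseteq> S' \<and> S' \<subseteq> E \<and> linked inc S' \<and> pendants inc S' = {} \<and>
    excess (verts inc S') S' \<le> potential inc S"
proof (rule pendant_free_extension[where Q="linked inc", OF _ assms])
  fix T f x
  assume "linked inc T" "T \<subseteq> E" "x \<in> inc f" "x \<in> verts inc T"
  then show "linked inc (insert f T)"
    by (intro linked_insert)
qed

lemma branching_pendant_free_extension:
  assumes "S \<subseteq> E" "branching inc S"
  shows "\<exists>S'. S \<subseteq> S' \<and> S' \<subseteq> E \<and> branching inc S' \<and> pendants inc S' = {} \<and>
    excess (verts inc S') S' \<le> potential inc S"
proof (rule pendant_free_extension[where Q="branching inc", OF _ assms])
  fix T f x
  assume "branching inc T" "T \<subseteq> E" "x \<in> inc f" "x \<in> verts inc T"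
  then show "branching inc (insert f T)"
    using finite_subset[OF _ finite_E] by (intro branching_insert) auto
qed

text \<open>Since \<open>G\<close> has no cycle component, a linked 2-regular \<open>S\<close> is met by an outside edge;
  attaching it creates a vertex of degree 3.\<close>
lemma branching_extension_of_2_regular:
  assumes S: "S \<subseteq> E" "S \<noteq> {}" "linked inc S" and regular: "\<forall>v\<in>verts inc S. degree S inc v = 2"
  shows "\<exists>N. S \<subseteq> N \<and> N \<subseteq> E \<and> linked inc N \<and> pendants inc N = {} \<and> branching inc N \<and>
    excess (verts inc N) N \<le> 1"
proof -
  have "\<not> (\<forall>g\<in>E. inc g \<inter> verts inc S \<noteq> {} \<longrightarrow> g \<in> S)"
    using closed_linked_not_2_regular[OF S] regular by blast
  then obtain g x where g: "g \<in> E" "g \<notin> S" "x \<in> inc g" "x \<in> verts inc S"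
    by blast
  have gS: "insert g S \<subseteq> E"
    using g(1) S(1) by blast
  have "pendants inc S = {}"
    using regular by (auto simp: pendants_def)
  then have "potential inc S = 0"
    using excess_eq_0_if_2_regular[OF multigraph_edges[OF S(1)] regular] by (simp add: potential_def)
  then have potential_g: "potential inc (insert g S) \<le> 1"
    using potential_insert[OF multigraph_edges[OF gS] g(2-4)] by (simp split: if_splits)
  have "\<exists>N. insert g S \<subseteq> N \<and> N \<subseteq> E \<and> linked inc N \<and> pendants inc N = {} \<and>
      excess (verts inc N) N \<le> potential inc (insert g S)"
    by (rule linked_pendant_free_extension[OF gS linked_insert[OF S(3) g(3,4)]])
  then obtain N where N: "insert g S \<subseteq> N" "N \<subseteq> E" "linked inc N" "pendants inc N = {}"
    and excess_N: "excess (verts inc N) N \<le> potential inc (insert g S)"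
    by blast
  have "degree S inc x = 2"
    using regular g(4) by blast
  then have "3 \<le> degree (insert g S) inc x"
    using degree_insert[OF finite_subset[OF S(1) finite_E] g(2), of inc x]
      incident_weight_pos[of inc g x] multigraph_edges_E g(1,3)
    by (simp add: multigraph_edges_def)
  also have "\<dots> \<le> degree N inc x"
    using N(1,2) finite_E by (intro degree_mono) (auto intro: finite_subset)
  finally have "branching inc N"
    by (rule branching_if_linked[OF N(3)])
  then show ?thesis
    using N excess_N potential_g by (intro exI[of _ N]) auto
qed

lemma branching_extension:
  assumes S: "S \<subseteq> E" "S \<noteq> {}" "linked inc S" "potential inc S \<le> 1"
  shows "\<exists>N. S \<subseteq> N \<and> N \<subseteq> E \<and> linked inc N \<and> pendants inc N = {} \<and> branching inc N \<and>
    excess (verts inc N) N \<le> 1"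
proof -
  obtain S1 where S1: "S \<subseteq> S1" "S1 \<subseteq> E" "linked inc S1" "pendants inc S1 = {}"
    and excess_S1: "excess (verts inc S1) S1 \<le> potential inc S"
    using linked_pendant_free_extension[OF S(1,3)] by blast
  show ?thesis
  proof (cases "\<exists>w. 3 \<le> degree S1 inc w")
    case True
    then have "branching inc S1"
      using branching_if_linked[OF S1(3)] by blast
    then show ?thesis
      using S1 excess_S1 S(4) by (intro exI[of _ S1]) simp
  next
    case False
    have "degree S1 inc v = 2" if v: "v \<in> verts inc S1" for v
    proof -
      have "1 \<le> degree S1 inc v"
        using degree_pos[OF multigraph_edges[OF S1(2)] v] .
      moreover have "degree S1 inc v \<noteq> 1"
        using S1(4) v by (auto simp: pendants_def)
      moreover have "\<not> 3 \<le> degree S1 inc v"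
        using False by blast
      ultimately show ?thesis
        by linarith
    qed
    moreover have "S1 \<noteq> {}"
      using S1(1) S(2) by blast
    ultimately have "\<exists>N. S1 \<subseteq> N \<and> N \<subseteq> E \<and> linked inc N \<and> pendants inc N = {} \<and>
        branching inc N \<and> excess (verts inc N) N \<le> 1"
      using S1(2,3) by (intro branching_extension_of_2_regular) auto
    then obtain N where "S1 \<subseteq> N" "N \<subseteq> E" "linked inc N" "pendants inc N = {}" "branching inc N"
      "excess (verts inc N) N \<le> 1"
      by blast
    then show ?thesis
      using S1(1) by (intro exI[of _ N]) auto
  qed
qed

lemma branching_extension_of_edge:
  assumes "a \<in> E"
  shows "\<exists>N. a \<in> N \<and> N \<subseteq> E \<and> linked inc N \<and> pendants inc N = {} \<and> branching inc N \<and>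
    excess (verts inc N) N \<le> 1"
proof -
  have "{a} \<subseteq> E"
    using assms by blast
  then have "\<exists>N. {a} \<subseteq> N \<and> N \<subseteq> E \<and> linked inc N \<and> pendants inc N = {} \<and>
      branching inc N \<and> excess (verts inc N) N \<le> 1"
    by (intro branching_extension linked_singleton potential_singleton_le_1 multigraph_edges) auto
  then show ?thesis
    by blast
qed

lemma nearest_after_path_edge:
  assumes nearest: "\<And>z y' m. z \<in> verts inc S \<Longrightarrow> y' \<in> inc b \<Longrightarrow> m < Suc n \<Longrightarrow> \<not> (adj E inc ^^ m) y' z"
    and x: "x \<in> verts inc S" and zx: "adj E inc z x" and fxz: "inc f = {x, z}"
    and z': "z' \<in> verts inc (insert f S)" and y': "y' \<in> inc b" and m: "m < n"
  shows "\<not> (adj E inc ^^ m) y' z'"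
proof
  assume z'_near: "(adj E inc ^^ m) y' z'"
  show False
  proof (cases "z' \<in> verts inc S")
    case True
    then show False
      using nearest y' m z'_near by simp
  next
    case False
    then have "(adj E inc ^^ Suc m) y' x"
      using z' fxz x z'_near zx by (auto intro: relpowp_Suc_I)
    moreover have "Suc m < Suc n"
      using m by simp
    ultimately show False
      using nearest[OF x y'] by blast
  qed
qed

text \<open>The hypothesis on \<open>n\<close> says that \<open>x \<in> verts inc S\<close> is a vertex of \<open>S\<close> nearest to \<open>inc b\<close>.
  Growing \<open>S\<close> along a shortest path from \<open>x\<close> to \<open>inc b\<close>, every path edge ends in a fresh
  pendant vertex, so the potential stays at most 1.\<close>
lemma linked_extension_along_path:
  assumes b: "b \<in> E" and path: "(adj E inc ^^ n) y x" "y \<in> inc b"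
    and S: "S \<subseteq> E" "linked inc S" "x \<in> verts inc S"
    and nearest: "\<And>z y' m. z \<in> verts inc S \<Longrightarrow> y' \<in> inc b \<Longrightarrow> m < n \<Longrightarrow> \<not> (adj E inc ^^ m) y' z"
    and potential: "potential inc S \<le> (if x \<in> pendants inc S then 1 else 0)"
  shows "\<exists>S'. S \<subseteq> S' \<and> S' \<subseteq> E \<and> b \<in> S' \<and> linked inc S' \<and> potential inc S' \<le> 1"
  using path S nearest potential
proof (induction n arbitrary: S x)
  case 0
  then have x: "x \<in> inc b"
    by simp
  show ?case
  proof (cases "b \<in> S")
    case True
    then show ?thesis
      using "0.prems" by (intro exI[of _ S]) (simp split: if_splits)
  next
    case False
    have bS: "insert b S \<subseteq> E"
      using "0.prems"(3) b by blast
    have "potential inc (insert b S) \<le> 1"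
      using potential_insert[OF multigraph_edges[OF bS] False x "0.prems"(5)] "0.prems"(7)
      by (simp split: if_splits)
    moreover have "linked inc (insert b S)"
      using "0.prems"(4) x "0.prems"(5) by (rule linked_insert)
    ultimately show ?thesis
      using bS by (intro exI[of _ "insert b S"]) auto
  qed
next
  case (Suc n)
  obtain z where yz: "(adj E inc ^^ n) y z" and zx: "adj E inc z x"
    using Suc.prems(1) by (rule relpowp_Suc_E)
  have z: "z \<notin> verts inc S"
    using Suc.prems(6)[of z y n] yz Suc.prems(2) by blast
  obtain f where f: "f \<in> E" "z \<in> inc f" "x \<in> inc f"
    using zx by (auto simp: adj_def)
  have fS: "f \<notin> S"
    using f(2) z by (auto simp: mem_verts_iff)
  have fS_E: "insert f S \<subseteq> E"
    using Suc.prems(3) f(1) by blast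
  have fxz: "inc f = {x, z}"
    using multigraph_edges_E f z Suc.prems(5) by (intro multigraph_edges_inc_eq_pair) auto
  note new = insert_path_edge[OF multigraph_edges[OF fS_E] Suc.prems(4) fS fxz Suc.prems(5) z
      Suc.prems(7)]
  have nearest': "\<not> (adj E inc ^^ m) y' z'"
    if "z' \<in> verts inc (insert f S)" "y' \<in> inc b" "m < n" for z' y' m
    using nearest_after_path_edge[OF Suc.prems(6) Suc.prems(5) zx fxz] that by blast
  have "\<exists>S'. insert f S \<subseteq> S' \<and> S' \<subseteq> E \<and> b \<in> S' \<and> linked inc S' \<and> potential inc S' \<le> 1"
    using Suc.IH[OF yz Suc.prems(2) fS_E new(1) _ nearest'] new(2,3) f(2) by simp
  then show ?case
    by blast
qed

lemma same_component_imp_reachable: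
  assumes "same_component V E inc a b" "u \<in> inc a" "w \<in> inc b"
  shows "(adj E inc)\<^sup>*\<^sup>* w u"
proof -
  obtain v where "inc a \<subseteq> {w \<in> V. (adj E inc)\<^sup>*\<^sup>* v w}" "inc b \<subseteq> {w \<in> V. (adj E inc)\<^sup>*\<^sup>* v w}"
    using assms(1) by (auto simp: same_component_def components_def)
  then have "(adj E inc)\<^sup>*\<^sup>* v u" "(adj E inc)\<^sup>*\<^sup>* v w"
    using assms(2,3) by auto
  then show ?thesis
    by (meson rtranclp_adj_sym rtranclp_trans)
qed

lemma reachable_imp_same_component:
  assumes "a \<in> E" "b \<in> E" "u \<in> inc a" "w \<in> inc b" "(adj E inc)\<^sup>*\<^sup>* u w"
  shows "same_component V E inc a b"
proof -
  define C where "C = {y \<in> V. (adj E inc)\<^sup>*\<^sup>* u y}"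
  have "u \<in> V"
    using assms(1,3) verts_E by (auto simp: mem_verts_iff)
  then have "C \<in> components V E inc"
    unfolding components_def C_def by blast
  moreover have "inc e \<subseteq> C" if "e \<in> E" "t \<in> inc e" "(adj E inc)\<^sup>*\<^sup>* u t" for e t
  proof
    fix y
    assume y: "y \<in> inc e"
    then have "adj E inc t y"
      using that(1,2) by (auto simp: adj_def)
    then have "(adj E inc)\<^sup>*\<^sup>* u y"
      by (rule rtranclp.rtrancl_into_rtrancl[OF that(3)])
    moreover have "y \<in> V"
      using y that(1) verts_E by (auto simp: mem_verts_iff)
    ultimately show "y \<in> C"
      unfolding C_def by blast
  qed
  ultimately show ?thesis
    unfolding same_component_def using assms by blast
qed

lemma shortest_path_between_edges:
  assumes ab: "same_component V E inc a b" and a: "a \<in> E" and b: "b \<in> E"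
  shows "\<exists>x\<in>inc a. \<exists>y\<in>inc b. \<exists>n. (adj E inc ^^ n) y x \<and>
    (\<forall>z\<in>inc a. \<forall>y'\<in>inc b. \<forall>m<n. \<not> (adj E inc ^^ m) y' z)"
proof -
  let ?near = "\<lambda>n. \<exists>x\<in>inc a. \<exists>y\<in>inc b. (adj E inc ^^ n) y x"
  obtain u where u: "u \<in> inc a"
    using multigraph_edges_incD(2)[OF multigraph_edges_E a] by blast
  obtain w where w: "w \<in> inc b"
    using multigraph_edges_incD(2)[OF multigraph_edges_E b] by blast
  have "(adj E inc)\<^sup>*\<^sup>* w u"
    using ab u w by (rule same_component_imp_reachable)
  then have "\<exists>n. ?near n"
    using u w by (auto simp: rtranclp_power)
  define n where "n = (LEAST n. ?near n)"
  have "?near n"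
    unfolding n_def using \<open>\<exists>n. ?near n\<close> by (rule LeastI_ex)
  moreover have "\<not> ?near m" if "m < n" for m
    using that unfolding n_def by (rule not_less_Least)
  ultimately show ?thesis
    by blast
qed

lemma seed_in_same_component:
  assumes ab: "same_component V E inc a b" and a: "a \<in> E" and b: "b \<in> E"
  shows "\<exists>M. a \<in> M \<and> b \<in> M \<and> M \<subseteq> E \<and> pendants inc M = {} \<and> branching inc M \<and>
    excess (verts inc M) M \<le> 1"
proof -
  obtain x y n where x: "x \<in> inc a" and y: "y \<in> inc b" and path: "(adj E inc ^^ n) y x"
    and nearest: "\<forall>z\<in>inc a. \<forall>y'\<in>inc b. \<forall>m<n. \<not> (adj E inc ^^ m) y' z"
    using shortest_path_between_edges[OF ab a b] by blast
  have a_E: "{a} \<subseteq> E"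
    using a by blast
  have "\<exists>S. {a} \<subseteq> S \<and> S \<subseteq> E \<and> b \<in> S \<and> linked inc S \<and> potential inc S \<le> 1"
  proof (rule linked_extension_along_path[OF b path y a_E linked_singleton])
    show "x \<in> verts inc {a}"
      using x by (simp add: verts_def)
    show "\<not> (adj E inc ^^ m) y' z" if "z \<in> verts inc {a}" "y' \<in> inc b" "m < n" for z y' m
      using nearest that by (simp add: verts_def)
    show "potential inc {a} \<le> (if x \<in> pendants inc {a} then 1 else 0)"
      using multigraph_edges[OF a_E] x by (rule potential_singleton)
  qed
  then obtain S where S: "{a} \<subseteq> S" "S \<subseteq> E" "b \<in> S" "linked inc S" "potential inc S \<le> 1"
    by blast
  have "S \<noteq> {}"
    using S(3) by blast
  then have "\<exists>M. S \<subseteq> M \<and> M \<subseteq> E \<and> linked inc M \<and> pendants inc M = {} \<and> branching inc M \<and>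
      excess (verts inc M) M \<le> 1"
    by (rule branching_extension[OF S(2) _ S(4,5)])
  then obtain M where "S \<subseteq> M" "M \<subseteq> E" "pendants inc M = {}" "branching inc M"
    "excess (verts inc M) M \<le> 1"
    by blast
  then show ?thesis
    using S(1,3) by (intro exI[of _ M]) auto
qed

lemma seed_in_different_components:
  assumes ab: "\<not> same_component V E inc a b" and a: "a \<in> E" and b: "b \<in> E"
  shows "\<exists>M. a \<in> M \<and> b \<in> M \<and> M \<subseteq> E \<and> pendants inc M = {} \<and> branching inc M \<and>
    excess (verts inc M) M \<le> 2"
proof -
  obtain A where A: "a \<in> A" "A \<subseteq> E" "linked inc A" "pendants inc A = {}" "branching inc A"
    and excess_A: "excess (verts inc A) A \<le> 1"
    using branching_extension_of_edge[OF a] by blast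
  obtain B where B: "b \<in> B" "B \<subseteq> E" "linked inc B" "pendants inc B = {}" "branching inc B"
    and excess_B: "excess (verts inc B) B \<le> 1"
    using branching_extension_of_edge[OF b] by blast
  obtain u w where u: "u \<in> inc a" and w: "w \<in> inc b"
    using multigraph_edges_incD(2)[OF multigraph_edges_E] a b by blast
  have disjoint: "verts inc A \<inter> verts inc B = {}"
  proof (rule ccontr)
    assume "verts inc A \<inter> verts inc B \<noteq> {}"
    then obtain z where z: "z \<in> verts inc A" "z \<in> verts inc B"
      by blast
    have "u \<in> verts inc A" "w \<in> verts inc B"
      using u w A(1) B(1) by (auto simp: mem_verts_iff)
    then have uz: "(adj A inc)\<^sup>*\<^sup>* u z" and zw: "(adj B inc)\<^sup>*\<^sup>* z w"
      using A(3) B(3) z unfolding linked_def by simp_all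
    have "(adj E inc)\<^sup>*\<^sup>* u w"
      using rtranclp_adj_mono[OF A(2) uz] rtranclp_adj_mono[OF B(2) zw] by (rule rtranclp_trans)
    then show False
      using reachable_imp_same_component[OF a b u w] ab by blast
  qed
  have AB: "A \<union> B \<subseteq> E"
    using A(2) B(2) by blast
  note union = pendant_free_branching_Un[OF multigraph_edges[OF AB] disjoint A(4,5) B(4,5)]
  show ?thesis
    using A(1) B(1) AB union excess_A excess_B by (intro exI[of _ "A \<union> B"]) auto
qed

lemma verts_disjoint_if_closed:
  assumes closed: "\<And>g. g \<in> E \<Longrightarrow> inc g \<inter> verts inc S \<noteq> {} \<Longrightarrow> g \<in> S"
    and f: "f \<in> E" "f \<notin> S" and N: "f \<in> N" "N \<subseteq> E" "linked inc N"
  shows "verts inc S \<inter> verts inc N = {}"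
proof (rule ccontr)
  assume "verts inc S \<inter> verts inc N \<noteq> {}"
  then obtain z where z: "z \<in> verts inc S" "z \<in> verts inc N"
    by blast
  obtain u where u: "u \<in> inc f"
    using multigraph_edges_incD(2)[OF multigraph_edges_E f(1)] by blast
  then have "u \<in> verts inc N"
    using N(1) by (auto simp: mem_verts_iff)
  then have "(adj N inc)\<^sup>*\<^sup>* z u"
    using N(3) z(2) unfolding linked_def by blast
  then have "u \<in> verts inc S"
    using reachable_in_verts_if_closed[OF closed rtranclp_adj_mono[OF N(2)] z(1)] by blast
  then show False
    using closed[OF f(1)] u f(2) by blast
qed

lemma pendant_free_branching_step:
  assumes S: "S \<subseteq> E" "pendants inc S = {}" "branching inc S" "S \<noteq> E"
  shows "\<exists>S'. S \<subset> S' \<and> S' \<subseteq> E \<and> pendants inc S' = {} \<and> branching inc S' \<and>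
    excess (verts inc S') S' \<le> excess (verts inc S) S + 1"
proof (cases "\<exists>f\<in>E. f \<notin> S \<and> inc f \<inter> verts inc S \<noteq> {}")
  case True
  then obtain f x where f: "f \<in> E" "f \<notin> S" "x \<in> inc f" "x \<in> verts inc S"
    by blast
  have fS: "insert f S \<subseteq> E"
    using S(1) f(1) by blast
  have "\<exists>S'. insert f S \<subseteq> S' \<and> S' \<subseteq> E \<and> branching inc S' \<and> pendants inc S' = {} \<and>
      excess (verts inc S') S' \<le> potential inc (insert f S)"
    using fS finite_subset[OF S(1) finite_E]
    by (intro branching_pendant_free_extension branching_insert[OF S(3) _ f(3,4)])
  then obtain S' where S': "insert f S \<subseteq> S'" "S' \<subseteq> E" "branching inc S'" "pendants inc S' = {}"
    and excess_S': "excess (verts inc S') S' \<le> potential inc (insert f S)"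
    by blast
  have "potential inc (insert f S) \<le> excess (verts inc S) S + 1"
    using potential_insert[OF multigraph_edges[OF fS] f(2-4)] S(2) by (simp add: potential_def)
  then show ?thesis
    using S' excess_S' f(2) by (intro exI[of _ S']) auto
next
  case False
  then have closed: "\<And>g. g \<in> E \<Longrightarrow> inc g \<inter> verts inc S \<noteq> {} \<Longrightarrow> g \<in> S"
    by blast
  obtain f where f: "f \<in> E" "f \<notin> S"
    using S(1,4) by blast
  obtain N where N: "f \<in> N" "N \<subseteq> E" "linked inc N" "pendants inc N = {}" "branching inc N"
    and excess_N: "excess (verts inc N) N \<le> 1"
    using branching_extension_of_edge[OF f(1)] by blast
  have disjoint: "verts inc S \<inter> verts inc N = {}"
    using closed f N(1-3) by (rule verts_disjoint_if_closed)
  have SN: "S \<union> N \<subseteq> E"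
    using S(1) N(2) by blast
  note union = pendant_free_branching_Un[OF multigraph_edges[OF SN] disjoint S(2,3) N(4,5)]
  have "S \<subset> S \<union> N"
    using N(1) f(2) by blast
  then show ?thesis
    using SN union excess_N by (intro exI[of _ "S \<union> N"]) auto
qed

lemma extension_with_excess:
  assumes "S \<subseteq> E" "pendants inc S = {}" "branching inc S"
    and "excess (verts inc S) S \<le> k" "k \<le> excess V E"
  shows "\<exists>S'. S \<subseteq> S' \<and> S' \<subseteq> E \<and> pendants inc S' = {} \<and> branching inc S' \<and>
    excess (verts inc S') S' = k"
  using assms
proof (induction "card (E - S)" arbitrary: S rule: less_induct)
  case less
  show ?case
  proof (cases "excess (verts inc S) S = k")
    case True
    then show ?thesis
      using less.prems by blast
  next
    case False
    have "S \<noteq> E"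
      using False less.prems(4,5) verts_E by auto
    then obtain S' where S': "S \<subset> S'" "S' \<subseteq> E" "pendants inc S' = {}" "branching inc S'"
      and excess_S': "excess (verts inc S') S' \<le> excess (verts inc S) S + 1"
      using pendant_free_branching_step[OF less.prems(1-3)] by blast
    have "card (E - S') < card (E - S)"
      using S'(1,2) finite_E by (intro psubset_card_mono) auto
    moreover have "excess (verts inc S') S' \<le> k"
      using excess_S' False less.prems(4) by linarith
    ultimately have "\<exists>S''. S' \<subseteq> S'' \<and> S'' \<subseteq> E \<and> pendants inc S'' = {} \<and> branching inc S'' \<and>
        excess (verts inc S'') S'' = k"
      using less.hyps S'(2-4) less.prems(5) by blast
    then obtain S'' where "S' \<subseteq> S''" "S'' \<subseteq> E" "pendants inc S'' = {}" "branching inc S''"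
      "excess (verts inc S'') S'' = k"
      by blast
    then show ?thesis
      using S'(1) by (intro exI[of _ S'']) auto
  qed
qed

lemma cacti_subgraph_through_seed:
  assumes "a \<in> M" "b \<in> M" "M \<subseteq> E" "pendants inc M = {}" "branching inc M"
    and "excess (verts inc M) M \<le> k" "k \<le> excess V E"
  shows "\<exists>VF EF. subgraph VF EF V E inc \<and> a \<in> EF \<and> b \<in> EF \<and> cacti VF EF inc \<and> excess VF EF = k"
proof -
  obtain F where F: "M \<subseteq> F" "F \<subseteq> E" "pendants inc F = {}" "branching inc F" "excess (verts inc F) F = k"
    using extension_with_excess[OF assms(3-7)] by blast
  have "subgraph (verts inc F) F V E inc"
    unfolding subgraph_def using verts_subset[OF F(2)] F(2) by (auto simp: verts_def)
  moreover have "cacti (verts inc F) F inc"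
    using multigraph_edges[OF F(2)] F(3,4) by (rule cacti_verts)
  ultimately show ?thesis
    using assms(1,2) F(1,5) by (intro exI[of _ "verts inc F"] exI[of _ F]) auto
qed

end

theorem mainTheorem5:
  fixes V :: "'v set" and E :: "'e set" and inc :: "'e \<Rightarrow> 'v set" and a b :: 'e
  assumes "cacti V E inc" and "a \<in> E" and "b \<in> E"
  shows "(same_component V E inc a b \<longrightarrow>
            (\<forall>k::int. 1 \<le> k \<and> k \<le> excess V E \<longrightarrow>
               (\<exists>VF EF. subgraph VF EF V E inc \<and> a \<in> EF \<and> b \<in> EF \<and>
                        cacti VF EF inc \<and> excess VF EF = k)))
       \<and> (\<not> same_component V E inc a b \<longrightarrow>
            (\<forall>k::int. 2 \<le> k \<and> k \<le> excess V E \<longrightarrow>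
               (\<exists>VF EF. subgraph VF EF V E inc \<and> a \<in> EF \<and> b \<in> EF \<and>
                        cacti VF EF inc \<and> excess VF EF = k)))"
proof -
  interpret cacti_graph V E inc
    using assms(1) by (rule cacti_graph.intro)
  show ?thesis
  proof (intro conjI impI allI)
    fix k :: int
    assume ab: "same_component V E inc a b" and k: "1 \<le> k \<and> k \<le> excess V E"
    obtain M where "a \<in> M" "b \<in> M" "M \<subseteq> E" "pendants inc M = {}" "branching inc M"
      "excess (verts inc M) M \<le> 1"
      using seed_in_same_component[OF ab assms(2,3)] by blast
    then show "\<exists>VF EF. subgraph VF EF V E inc \<and> a \<in> EF \<and> b \<in> EF \<and> cacti VF EF inc \<and> excess VF EF = k"
      using k by (intro cacti_subgraph_through_seed[of a M b]) auto
  next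
    fix k :: int
    assume ab: "\<not> same_component V E inc a b" and k: "2 \<le> k \<and> k \<le> excess V E"
    obtain M where "a \<in> M" "b \<in> M" "M \<subseteq> E" "pendants inc M = {}" "branching inc M"
      "excess (verts inc M) M \<le> 2"
      using seed_in_different_components[OF ab assms(2,3)] by blast
    then show "\<exists>VF EF. subgraph VF EF V E inc \<and> a \<in> EF \<and> b \<in> EF \<and> cacti VF EF inc \<and> excess VF EF = k"
      using k by (intro cacti_subgraph_through_seed[of a M b]) auto
  qed
qed

end
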